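(* A $\lambda$-term $M$ is in $\mathsf v$-normal form if and only if $M$ is a $G$-term generated by the following grammar (with $k\ge0$): $G::=H\mid R$; $H::=x\mid\lambda x.G\mid xHG_1\cdots G_k$; $R::=(\lambda x.G)(yHG_1\cdots G_k)$.
   Context: $\lambda$-terms and values are $M,N::=V\mid MN$, $V::=x\mid\lambda x.M$ (application associates to the left), up to $\alpha$-conversion. Rules: $(\beta_v)$ $(\lambda x.M)V\to M\{x:=V\}$ if $V$ is a value; $(\sigma_1)$ $(\lambda x.M)NP\to(\lambda x.MP)N$ if $x\notin\mathrm{FV}(P)$; $(\sigma_3)$ $V((\lambda x.M)N)\to(\lambda x.VM)N$ if $V$ is a value and $x\notin\mathrm{FV}(V)$. $\to_{\mathsf v}$ is the contextual closure of their union; $M$ is in $\mathsf v$-normal form if there is no $N$ with $M\to_{\mathsf v}N$. *)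

theory Defs
  imports Main
begin

text \<open>Lambda-terms up to alpha-conversion, represented with de Bruijn indices.\<close>
datatype trm = Var nat | Lam trm | App trm trm

fun is_value :: "trm \<Rightarrow> bool" where
  "is_value (Var _) = True"
| "is_value (Lam _) = True"
| "is_value (App _ _) = False"

fun lift :: "nat \<Rightarrow> trm \<Rightarrow> trm" where
  "lift k (Var i) = (if i < k then Var i else Var (Suc i))"
| "lift k (Lam M) = Lam (lift (Suc k) M)"
| "lift k (App M N) = App (lift k M) (lift k N)"

fun subst :: "trm \<Rightarrow> nat \<Rightarrow> trm \<Rightarrow> trm" where
  "subst (Var i) k s = (if k < i then Var (i - 1) else if i = k then s else Var i)"
| "subst (Lam M) k s = Lam (subst M (Suc k) (lift 0 s))"
| "subst (App M N) k s = App (subst M k s) (subst N k s)"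

text \<open>The reduction \<open>\<rightarrow>\<^sub>v\<close>: contextual closure of beta_v, sigma1, sigma3.
  The freshness side conditions of sigma1/sigma3 are realised by lifting.\<close>
inductive step_v :: "trm \<Rightarrow> trm \<Rightarrow> bool" where
  beta_v: "is_value V \<Longrightarrow> step_v (App (Lam M) V) (subst M 0 V)"
| sigma1: "step_v (App (App (Lam M) N) P) (App (Lam (App M (lift 0 P))) N)"
| sigma3: "is_value V \<Longrightarrow> step_v (App V (App (Lam M) N)) (App (Lam (App (lift 0 V) M)) N)"
| appL: "step_v M M' \<Longrightarrow> step_v (App M N) (App M' N)"
| appR: "step_v N N' \<Longrightarrow> step_v (App M N) (App M N')"
| lam: "step_v M M' \<Longrightarrow> step_v (Lam M) (Lam M')"

definition v_normal :: "trm \<Rightarrow> bool" where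
  "v_normal M \<longleftrightarrow> \<not> (\<exists>N. step_v M N)"

text \<open>The grammar: G ::= H | R;  H ::= x | \<lambda>x.G | x H G1..Gk;  R ::= (\<lambda>x.G)(y H G1..Gk).
  \<open>isA\<close> characterises the terms x H G1 ... Gk (k \<ge> 0).\<close>
inductive isG :: "trm \<Rightarrow> bool" and isH :: "trm \<Rightarrow> bool" and isA :: "trm \<Rightarrow> bool" where
  G_H: "isH M \<Longrightarrow> isG M"
| G_R: "isG M \<Longrightarrow> isA N \<Longrightarrow> isG (App (Lam M) N)"
| H_Var: "isH (Var x)"
| H_Lam: "isG M \<Longrightarrow> isH (Lam M)"
| H_A: "isA M \<Longrightarrow> isH M"
| A_base: "isH N \<Longrightarrow> isA (App (Var x) N)"
| A_app: "isA M \<Longrightarrow> isG N \<Longrightarrow> isA (App M N)"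

end

theory Submission
  imports Defs
begin

text \<open>Both sides of the equivalence are compositional: a term is \<open>\<rightarrow>\<^sub>v\<close>-normal iff its immediate
  subterms are and it is not itself a redex of \<open>\<beta>\<^sub>v\<close>, \<open>\<sigma>\<^sub>1\<close> or \<open>\<sigma>\<^sub>3\<close>, and the grammar admits
  exactly the same description.\<close>

definition v_redex :: "trm \<Rightarrow> bool" where
  "v_redex M \<longleftrightarrow>
     (\<exists>P V. M = App (Lam P) V \<and> is_value V) \<or>
     (\<exists>P N Q. M = App (App (Lam P) N) Q) \<or>
     (\<exists>V P N. M = App V (App (Lam P) N) \<and> is_value V)"

inductive_cases step_v_VarE: "step_v (Var x) K"
inductive_cases step_v_LamE: "step_v (Lam M) K"

lemma v_normal_Var: "v_normal (Var x)"
  unfolding v_normal_def by (auto elim: step_v_VarE)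

lemma v_normal_Lam_iff: "v_normal (Lam M) \<longleftrightarrow> v_normal M"
  unfolding v_normal_def by (auto elim: step_v_LamE intro: step_v.lam)

lemma v_normal_App_iff:
  "v_normal (App M N) \<longleftrightarrow> v_normal M \<and> v_normal N \<and> \<not> v_redex (App M N)"
proof
  assume nf: "v_normal (App M N)"
  have "\<not> v_redex (App M N)"
    using nf step_v.beta_v step_v.sigma1 step_v.sigma3
    unfolding v_normal_def v_redex_def by blast
  with nf show "v_normal M \<and> v_normal N \<and> \<not> v_redex (App M N)"
    unfolding v_normal_def by (blast intro: step_v.appL step_v.appR)
next
  assume nf: "v_normal M \<and> v_normal N \<and> \<not> v_redex (App M N)"
  have False if "step_v (App M N) K" for K
    using that
  proof cases
    case appL
    with nf show False
      unfolding v_normal_def by blast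
  next
    case appR
    with nf show False
      unfolding v_normal_def by blast
  qed (use nf in \<open>auto simp: v_redex_def\<close>)
  then show "v_normal (App M N)"
    unfolding v_normal_def by blast
qed

lemma isA_not_value: "isA M \<Longrightarrow> \<not> is_value M"
  by (cases rule: isA.cases) auto

lemma isA_not_App_Lam: "isA M \<Longrightarrow> M \<noteq> App (Lam P) Q"
  by (cases rule: isA.cases) (auto dest: isA_not_value)

lemma isH_iff: "isH M \<longleftrightarrow> isG M \<and> (\<nexists>P Q. M = App (Lam P) Q)"
proof
  assume "isH M"
  then show "isG M \<and> (\<nexists>P Q. M = App (Lam P) Q)"
    by (cases rule: isH.cases) (auto intro: isG_isH_isA.intros dest: isA_not_App_Lam)
next
  assume "isG M \<and> (\<nexists>P Q. M = App (Lam P) Q)"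
  then show "isH M"
    by (auto elim: isG.cases)
qed

lemma isA_iff: "isA M \<longleftrightarrow> isH M \<and> \<not> is_value M"
  by (auto elim: isH.cases intro: H_A dest: isA_not_value)

lemma isG_Var: "isG (Var x)"
  by (intro G_H H_Var)

lemma isG_Lam_iff: "isG (Lam M) \<longleftrightarrow> isG M"
proof
  assume "isG (Lam M)"
  then have "isH (Lam M)"
    by (cases rule: isG.cases) auto
  then show "isG M"
    by (cases rule: isH.cases) (auto dest: isA_not_value)
qed (blast intro: G_H H_Lam)

lemma isG_App_iff:
  "isG (App M N) \<longleftrightarrow> isG M \<and> isG N \<and> \<not> v_redex (App M N)"
proof
  assume "isG (App M N)"
  then show "isG M \<and> isG N \<and> \<not> v_redex (App M N)"
  proof (cases rule: isG.cases)
    case G_H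
    then have "isA (App M N)"
      by (simp add: isA_iff)
    then show ?thesis
    proof (cases rule: isA.cases)
      case (A_base x)
      then show ?thesis
        by (auto simp: v_redex_def isH_iff intro: isG_Var)
    next
      case A_app
      then show ?thesis
        by (auto simp: v_redex_def isA_iff isH_iff)
    qed
  next
    case (G_R P)
    then show ?thesis
      by (auto simp: v_redex_def isA_iff isH_iff isG_Lam_iff)
  qed
next
  assume G: "isG M \<and> isG N \<and> \<not> v_redex (App M N)"
  show "isG (App M N)"
  proof (cases M)
    case Var
    with G have "isH N"
      by (auto simp: v_redex_def isH_iff)
    with Var show ?thesis
      by (auto intro: G_H H_A A_base)
  next
    case Lam
    with G show ?thesis
      by (auto simp: v_redex_def isA_iff isH_iff isG_Lam_iff intro: G_R)
  next
    case App
    with G have "isA M"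
      by (auto simp: v_redex_def isA_iff isH_iff)
    with G show ?thesis
      by (blast intro: G_H H_A A_app)
  qed
qed

theorem lemma1p7:
  shows "v_normal M \<longleftrightarrow> isG M"
  by (induction M)
    (simp_all add: v_normal_Var v_normal_Lam_iff v_normal_App_iff
      isG_Var isG_Lam_iff isG_App_iff)

end
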